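(* Let $N\ge1$, $1\le a\le N$ and $p\ge0$ be integers. For integers $q_1,\dots,q_N$ set $C_2(q_1,\dots,q_N)=\sum_{j=1}^N s_j(s_j-2j)$ with $s_j=q_j-\frac1N\sum_{k=1}^N q_k$. Then for all integers $p_1\ge p_2\ge\dots\ge p_a\ge0$ with $\sum_{i=1}^a p_i=ap$, $$C_2(p_1,\dots,p_a,0,\dots,0)-C_2(\underbrace{p,\dots,p}_{a},0,\dots,0)\ge0,$$ with equality if and only if $p_i=p$ for all $i=1,\dots,a$.
   Context: Here $(p_1,\dots,p_a,0,\dots,0)$ and $(p,\dots,p,0,\dots,0)$ denote $N$-tuples padded with zeros. *)

theory Defs
  imports Complex_Main
begin

text \<open>An N-tuple of integers is represented as a function q :: nat => int,
  whose entries q 1, ..., q N are relevant.\<close>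

definition shifted :: "nat \<Rightarrow> (nat \<Rightarrow> int) \<Rightarrow> nat \<Rightarrow> real" where
  "shifted N q j = real_of_int (q j) - (\<Sum>k=1..N. real_of_int (q k)) / real N"

definition C2 :: "nat \<Rightarrow> (nat \<Rightarrow> int) \<Rightarrow> real" where
  "C2 N q = (\<Sum>j=1..N. shifted N q j * (shifted N q j - 2 * real j))"

definition pad :: "nat \<Rightarrow> (nat \<Rightarrow> int) \<Rightarrow> nat \<Rightarrow> int" where
  "pad a P j = (if 1 \<le> j \<and> j \<le> a then P j else 0)"

end

theory Submission
  imports Defs
begin

text \<open>Both tuples have the same total, so the centering by the mean cancels in the
  difference of the two values of C2, which becomes \<open>\<Sum>j. d\<^sub>j\<^sup>2 - 2 \<Sum>j. j d\<^sub>j\<close>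
  with \<open>d\<^sub>j = p\<^sub>j - p\<close> and \<open>\<Sum>j. d\<^sub>j = 0\<close>. As \<open>d\<close> is nonincreasing, Chebyshev's sum
  inequality gives \<open>\<Sum>j. j d\<^sub>j \<le> 0\<close>, so the difference is at least \<open>\<Sum>j. d\<^sub>j\<^sup>2\<close>,
  and it vanishes only if every \<open>d\<^sub>j\<close> does.\<close>

lemma C2_diff_same_sum:
  assumes "(\<Sum>k=1..N. q k) = (\<Sum>k=1..N. r k)"
  shows "C2 N q - C2 N r = (\<Sum>j=1..N. real_of_int ((q j)\<^sup>2 - (r j)\<^sup>2 - 2 * int j * (q j - r j)))"
proof -
  define m where "m = (\<Sum>k=1..N. real_of_int (q k)) / real N"
  have m_r: "m = (\<Sum>k=1..N. real_of_int (r k)) / real N"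
    unfolding m_def using assms by (metis of_int_sum)
  have shifted: "shifted N q j = q j - m" "shifted N r j = r j - m" for j
    unfolding shifted_def using m_def m_r by auto
  have diff_sum_0: "(\<Sum>j=1..N. real_of_int (q j - r j)) = 0"
    using assms by (simp add: sum_subtractf flip: of_int_sum)
  have "C2 N q - C2 N r
      = (\<Sum>j=1..N. (q j - m) * (q j - m - 2 * j) - (r j - m) * (r j - m - 2 * j))"
    unfolding C2_def shifted by (simp add: sum_subtractf)
  also have "\<dots> = (\<Sum>j=1..N. real_of_int ((q j)\<^sup>2 - (r j)\<^sup>2 - 2 * int j * (q j - r j))
      - 2 * m * real_of_int (q j - r j))"
    by (rule sum.cong) (auto simp: algebra_simps power2_eq_square)
  also have "\<dots> = (\<Sum>j=1..N. real_of_int ((q j)\<^sup>2 - (r j)\<^sup>2 - 2 * int j * (q j - r j)))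
      - 2 * m * (\<Sum>j=1..N. real_of_int (q j - r j))"
    by (simp add: sum_subtractf sum_distrib_left del: of_int_diff)
  also note diff_sum_0
  finally show ?thesis
    by simp
qed

lemma sum_pad:
  assumes "a \<le> N"
  shows "(\<Sum>k=1..N. pad a Q k) = (\<Sum>k=1..a. Q k)"
proof -
  have "(\<Sum>k=1..N. pad a Q k) = (\<Sum>k=1..a. pad a Q k)"
    by (rule sum.mono_neutral_right) (use assms in \<open>auto simp: pad_def\<close>)
  also have "\<dots> = (\<Sum>k=1..a. Q k)"
    by (rule sum.cong) (auto simp: pad_def)
  finally show ?thesis .
qed

lemma C2_pad_diff:
  assumes "a \<le> N" and "(\<Sum>i=1..a. P i) = int a * p"
  shows "C2 N (pad a P) - C2 N (pad a (\<lambda>_. p))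
    = real_of_int ((\<Sum>j=1..a. (P j - p)\<^sup>2) - 2 * (\<Sum>j=1..a. int j * (P j - p)))"
proof -
  define d where "d j = P j - p" for j
  have sum_d: "(\<Sum>j=1..a. d j) = 0"
    unfolding d_def using assms(2) by (simp add: sum_subtractf)
  have same_sum: "(\<Sum>k=1..N. pad a P k) = (\<Sum>k=1..N. pad a (\<lambda>_. p) k)"
    unfolding sum_pad[OF assms(1)] using assms(2) by simp
  have "C2 N (pad a P) - C2 N (pad a (\<lambda>_. p))
      = (\<Sum>j=1..N. real_of_int ((pad a P j)\<^sup>2 - (pad a (\<lambda>_. p) j)\<^sup>2
          - 2 * int j * (pad a P j - pad a (\<lambda>_. p) j)))"
    by (rule C2_diff_same_sum[OF same_sum])
  also have "\<dots> = real_of_int (\<Sum>j=1..a. (d j)\<^sup>2 + 2 * p * d j - 2 * int j * d j)"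
    unfolding of_int_sum
    by (rule trans[OF sum.mono_neutral_right sum.cong])
      (use assms(1) in \<open>auto simp: pad_def d_def power2_eq_square algebra_simps\<close>)
  also have "(\<Sum>j=1..a. (d j)\<^sup>2 + 2 * p * d j - 2 * int j * d j)
      = (\<Sum>j=1..a. (d j)\<^sup>2) - 2 * (\<Sum>j=1..a. int j * d j)"
    using sum_d by (simp add: sum.distrib sum_subtractf mult.assoc flip: sum_distrib_left)
  finally show ?thesis
    by (simp only: d_def)
qed

lemma lift_Suc_antimono_on_le:
  fixes d :: "nat \<Rightarrow> 'a::order"
  assumes "\<And>i. m \<le> i \<Longrightarrow> i < n \<Longrightarrow> d (Suc i) \<le> d i"
    and "m \<le> j" "j \<le> k" "k \<le> n"
  shows "d k \<le> d j"
  using assms(3,4)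
proof (induction k rule: dec_induct)
  case base
  then show ?case by simp
next
  case (step i)
  then show ?case
    using assms(1)[of i] assms(2) by (auto intro: order_trans)
qed

lemma sum_index_times_antitone_le_0:
  fixes d :: "nat \<Rightarrow> 'a::linordered_idom"
  assumes antitone: "\<And>i. 1 \<le> i \<Longrightarrow> i < a \<Longrightarrow> d (Suc i) \<le> d i"
    and sum_0: "(\<Sum>i=1..a. d i) = 0"
  shows "(\<Sum>j=1..a. of_nat j * d j) \<le> 0"
proof -
  have shift: "(\<Sum>j=1..a. f j) = (\<Sum>k=0..<a. f (Suc k))" for f :: "nat \<Rightarrow> 'a"
    by (metis One_nat_def atLeastLessThanSuc_atLeastAtMost sum.shift_bounds_Suc_ivl)
  have "of_nat a * (\<Sum>k=0..<a. of_nat (Suc k) * d (Suc k))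
      \<le> (\<Sum>k=0..<a. of_nat (Suc k)) * (\<Sum>k=0..<a. d (Suc k))"
    by (rule Chebyshev_sum_upper)
      (auto intro: lift_Suc_antimono_on_le[where m=1 and n=a and d=d, OF antitone])
  then have "of_nat a * (\<Sum>j=1..a. of_nat j * d j) \<le> 0"
    using sum_0 by (simp only: shift)
  then show ?thesis
    by (cases "a = 0") (auto simp: mult_le_0_iff)
qed

theorem mainTheorem6:
  fixes N a :: nat and p :: int and P :: "nat \<Rightarrow> int"
  assumes "N \<ge> 1" and "1 \<le> a" and "a \<le> N" and "p \<ge> 0"
    and "\<And>i. 1 \<le> i \<Longrightarrow> i < a \<Longrightarrow> P i \<ge> P (Suc i)"
    and "P a \<ge> 0"
    and "(\<Sum>i=1..a. P i) = int a * p"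
  shows "C2 N (pad a P) - C2 N (pad a (\<lambda>_. p)) \<ge> 0
    \<and> (C2 N (pad a P) - C2 N (pad a (\<lambda>_. p)) = 0 \<longleftrightarrow> (\<forall>i\<in>{1..a}. P i = p))"
proof -
  let ?S = "\<Sum>j=1..a. (P j - p)\<^sup>2" and ?T = "\<Sum>j=1..a. int j * (P j - p)"
  have T_le_0: "?T \<le> 0"
    by (rule sum_index_times_antitone_le_0) (use assms(5,7) in \<open>auto simp: sum_subtractf\<close>)
  have S_ge_0: "?S \<ge> 0"
    by (simp add: sum_nonneg)
  have S_0_iff: "?S = 0 \<longleftrightarrow> (\<forall>i\<in>{1..a}. P i = p)"
    by (subst sum_nonneg_eq_0_iff) auto
  have "(?S - 2 * ?T = 0) \<longleftrightarrow> (\<forall>i\<in>{1..a}. P i = p)"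
    using S_0_iff T_le_0 S_ge_0 by auto
  then show ?thesis
    unfolding C2_pad_diff[OF assms(3,7)] of_int_0_le_iff of_int_eq_0_iff
    using T_le_0 S_ge_0 by simp
qed

end
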